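(* For every $n\ge0$, $Inn_l(Q_n)=Inn_r(Q_n)$, and $Inn(Q_n)=\langle T_x,\ L_{x,y}\mid x,y\in Q_n\rangle$.
   Context: Cayley--Dickson loops: $Q_0=\{1,-1\}\subset\mathbb{R}$ with conjugation $x^*=x$. For $n\ge1$, $Q_n=\{(x,0),(x,1)\mid x\in Q_{n-1}\}$ with multiplication $(x,0)(y,0)=(xy,0)$, $(x,0)(y,1)=(yx,1)$, $(x,1)(y,0)=(xy^*,1)$, $(x,1)(y,1)=(-y^*x,0)$ and conjugation $(x,0)^*=(x^*,0)$, $(x,1)^*=(-x,1)$, where $-(x,a)=(-x,a)$. $Q_n$ is a loop with neutral element $1=(1,0,\dots,0)$. For a loop $Q$: $L_x(a)=xa$, $R_x(a)=ax$, $T_x=L_x^{-1}R_x$, $L_{x,y}=L_{yx}^{-1}L_yL_x$, $R_{x,y}=R_{xy}^{-1}R_yR_x$; $Mlt(Q)=\langle L_x,R_x\rangle$, $Mlt_l(Q)=\langle L_x\rangle$, $Mlt_r(Q)=\langle R_x\rangle$, and $Inn(Q)$, $Inn_l(Q)$, $Inn_r(Q)$ are the stabilizers of $1$ in these groups respectively. *)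

theory Defs
  imports "HOL-Algebra.Bij" "HOL-Algebra.Generated_Groups"
begin

text \<open>Elements of Q_n are encoded as pairs (s, bs): s is the sign (True means -1),
  bs is a list of n bits; the head of bs is the outermost Cayley--Dickson bit,
  i.e. (x, a) in Q_n is encoded as (sign of x, a # bits of x).\<close>

type_synonym cd = "bool \<times> bool list"

definition cd_carrier :: "nat \<Rightarrow> cd set" where
  "cd_carrier n = {(s, bs). length bs = n}"

definition cd_one :: "nat \<Rightarrow> cd" where
  "cd_one n = (False, replicate n False)"

definition cd_neg :: "cd \<Rightarrow> cd" where
  "cd_neg x = (\<not> fst x, snd x)"

definition cd_cons :: "bool \<Rightarrow> cd \<Rightarrow> cd" where
  "cd_cons a x = (fst x, a # snd x)"

fun conj_sign :: "bool \<Rightarrow> bool list \<Rightarrow> bool" where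
  "conj_sign s [] = s"
| "conj_sign s (False # bs) = conj_sign s bs"
| "conj_sign s (True # bs) = (\<not> s)"

definition cd_conj :: "cd \<Rightarrow> cd" where
  "cd_conj x = (conj_sign (fst x) (snd x), snd x)"

function (sequential) cd_mult :: "cd \<Rightarrow> cd \<Rightarrow> cd" where
  "cd_mult (s, []) (t, []) = (s \<noteq> t, [])"
| "cd_mult (s, False # xs) (t, False # ys) = cd_cons False (cd_mult (s, xs) (t, ys))"
| "cd_mult (s, False # xs) (t, True # ys) = cd_cons True (cd_mult (t, ys) (s, xs))"
| "cd_mult (s, True # xs) (t, False # ys) =
     cd_cons True (cd_mult (s, xs) (conj_sign t ys, ys))"
| "cd_mult (s, True # xs) (t, True # ys) =
     cd_cons False (cd_neg (cd_mult (conj_sign t ys, ys) (s, xs)))"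
| "cd_mult x y = x"  (* mismatched lengths: irrelevant *)
  by pat_completeness auto
termination
  by (relation "measure (\<lambda>(x, y). length (snd x) + length (snd y))") auto

definition Lt :: "nat \<Rightarrow> cd \<Rightarrow> cd \<Rightarrow> cd" where
  "Lt n x = restrict (\<lambda>a. cd_mult x a) (cd_carrier n)"

definition Rt :: "nat \<Rightarrow> cd \<Rightarrow> cd \<Rightarrow> cd" where
  "Rt n x = restrict (\<lambda>a. cd_mult a x) (cd_carrier n)"

abbreviation SymQ :: "nat \<Rightarrow> (cd \<Rightarrow> cd) monoid" where
  "SymQ n \<equiv> BijGroup (cd_carrier n)"

definition Mlt :: "nat \<Rightarrow> (cd \<Rightarrow> cd) set" where
  "Mlt n = generate (SymQ n) ((Lt n ` cd_carrier n) \<union> (Rt n ` cd_carrier n))"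

definition Mlt_l :: "nat \<Rightarrow> (cd \<Rightarrow> cd) set" where
  "Mlt_l n = generate (SymQ n) (Lt n ` cd_carrier n)"

definition Mlt_r :: "nat \<Rightarrow> (cd \<Rightarrow> cd) set" where
  "Mlt_r n = generate (SymQ n) (Rt n ` cd_carrier n)"

definition stab1 :: "nat \<Rightarrow> (cd \<Rightarrow> cd) set \<Rightarrow> (cd \<Rightarrow> cd) set" where
  "stab1 n G = {f \<in> G. f (cd_one n) = cd_one n}"

definition Inn :: "nat \<Rightarrow> (cd \<Rightarrow> cd) set" where "Inn n = stab1 n (Mlt n)"
definition Inn_l :: "nat \<Rightarrow> (cd \<Rightarrow> cd) set" where "Inn_l n = stab1 n (Mlt_l n)"
definition Inn_r :: "nat \<Rightarrow> (cd \<Rightarrow> cd) set" where "Inn_r n = stab1 n (Mlt_r n)"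

definition Tmap :: "nat \<Rightarrow> cd \<Rightarrow> cd \<Rightarrow> cd" where
  "Tmap n x = inv\<^bsub>SymQ n\<^esub> (Lt n x) \<otimes>\<^bsub>SymQ n\<^esub> Rt n x"

definition Lmap :: "nat \<Rightarrow> cd \<Rightarrow> cd \<Rightarrow> cd \<Rightarrow> cd" where
  "Lmap n x y = inv\<^bsub>SymQ n\<^esub> (Lt n (cd_mult y x)) \<otimes>\<^bsub>SymQ n\<^esub> Lt n y \<otimes>\<^bsub>SymQ n\<^esub> Lt n x"

end

theory Submission
  imports Defs
begin

(* For a loop Q, the multiplication group is the
   product L_Q Inn(Q) of the set of left translations with the inner mapping group
   (every f in Mlt(Q) equals L_{f(1)} composed with an inner mapping).  Running this
   coset argument with a candidate generating set K, it suffices to check that L_Q K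
   is stable under left multiplication by the generators of Mlt(Q) and their
   inverses; explicit group words show this for K generated by the L_{x,y}
   (Inn_l(Q) = <L_{x,y}>) and for K generated by T_x, L_{x,y}, R_{x,y} (Inn(Q)).
   Whenever Inn_r(Q) <= Inn_l(Q), the R_{x,y} are redundant.

   In closed form Q_n is a sign-twisted (Z/2)^n, so
   every multiplication map is a sign-twisted translation, and those fixing 1 merely
   change signs and commute with the conjugation map J.  Since J L_x J = R_{x*},
   conjugation by J exchanges Mlt_l and Mlt_r and fixes Inn_l and Inn_r pointwise,
   whence Inn_l(Q_n) = Inn_r(Q_n), and Part 1 yields Inn(Q_n) = <T_x, L_{x,y}>. *)

lemma carrier_BijGroup [simp]: "carrier (BijGroup S) = Bij S"
  by (simp add: BijGroup_def)

lemma BijGroup_one_closed [simp]: "\<one>\<^bsub>BijGroup S\<^esub> \<in> Bij S"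
  by (simp add: BijGroup_def id_Bij)

lemma BijGroup_inv_closed [simp]: "f \<in> Bij S \<Longrightarrow> inv\<^bsub>BijGroup S\<^esub> f \<in> Bij S"
  using group.inv_closed[OF group_BijGroup, of f S] by simp

lemma BijGroup_mult_closed [simp]:
  "f \<in> Bij S \<Longrightarrow> g \<in> Bij S \<Longrightarrow> f \<otimes>\<^bsub>BijGroup S\<^esub> g \<in> Bij S"
  by (simp add: BijGroup_def compose_Bij)

lemma Bij_mem: "f \<in> Bij S \<Longrightarrow> x \<in> S \<Longrightarrow> f x \<in> S"
  using Bij_imp_funcset by blast

lemma BijGroup_mult_apply:
  "f \<in> Bij S \<Longrightarrow> g \<in> Bij S \<Longrightarrow> x \<in> S \<Longrightarrow> (f \<otimes>\<^bsub>BijGroup S\<^esub> g) x = f (g x)"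
  by (simp add: BijGroup_def compose_def)

lemma BijGroup_one_apply: "x \<in> S \<Longrightarrow> \<one>\<^bsub>BijGroup S\<^esub> x = x"
  by (simp add: BijGroup_def)

lemma BijGroup_inv_apply:
  assumes "f \<in> Bij S" "x \<in> S"
  shows "(inv\<^bsub>BijGroup S\<^esub> f) (f x) = x"
  using assms by (auto simp: inv_BijGroup Bij_def bij_betw_def)

lemma Bij_eqI: "f \<in> Bij S \<Longrightarrow> g \<in> Bij S \<Longrightarrow> (\<And>x. x \<in> S \<Longrightarrow> f x = g x) \<Longrightarrow> f = g"
  by (meson Bij_imp_extensional extensionalityI)

lemma restrict_in_Bij: "bij_betw f S S \<Longrightarrow> restrict f S \<in> Bij S"
  by (simp add: Bij_def)

lemma stabilizer_subgroup:
  assumes x: "x \<in> S"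
  shows "subgroup {f \<in> Bij S. f x = x} (BijGroup S)"
proof -
  interpret group "BijGroup S" by (rule group_BijGroup)
  show ?thesis
  proof
    show "{f \<in> Bij S. f x = x} \<subseteq> carrier (BijGroup S)" by auto
  next
    fix f g assume "f \<in> {f \<in> Bij S. f x = x}" "g \<in> {f \<in> Bij S. f x = x}"
    then show "f \<otimes>\<^bsub>BijGroup S\<^esub> g \<in> {f \<in> Bij S. f x = x}"
      using x m_closed[of f g] BijGroup_mult_apply[of f S g x] by simp
  next
    show "\<one>\<^bsub>BijGroup S\<^esub> \<in> {f \<in> Bij S. f x = x}"
      using x one_closed BijGroup_one_apply[of x S] by simp
  next
    fix f assume "f \<in> {f \<in> Bij S. f x = x}"
    then have "f \<in> Bij S" "f x = x" by auto
    then have "(inv\<^bsub>BijGroup S\<^esub> f) x = x"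
      using BijGroup_inv_apply[of f S x] x by simp
    then show "inv\<^bsub>BijGroup S\<^esub> f \<in> {f \<in> Bij S. f x = x}"
      using \<open>f \<in> Bij S\<close> inv_closed[of f] by simp
  qed
qed

lemma (in group) inv_cancel_left:
  assumes "x \<in> carrier G" "y \<in> carrier G"
  shows "x \<otimes> (inv x \<otimes> y) = y" and "inv x \<otimes> (x \<otimes> y) = y"
  using assms by (simp_all add: m_assoc[symmetric])

lemma (in group) generate_subset_if_closed:
  assumes S: "S \<subseteq> carrier G" and M: "M \<subseteq> carrier G" "\<one> \<in> M"
    and closed: "\<And>g m. g \<in> S \<Longrightarrow> m \<in> M \<Longrightarrow> g \<otimes> m \<in> M \<and> inv g \<otimes> m \<in> M"
  shows "generate G S \<subseteq> M"
proof
  fix f assume f: "f \<in> generate G S"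
  have "\<forall>m \<in> M. f \<otimes> m \<in> M"
    using f
  proof induction
    case one
    then show ?case using M by auto
  next
    case (incl h)
    then show ?case using closed by blast
  next
    case (inv h)
    then show ?case using closed by blast
  next
    case (eng h1 h2)
    have "h1 \<in> carrier G" "h2 \<in> carrier G"
      using eng.hyps generate_in_carrier[OF S] by auto
    then show ?case using eng.IH M by (auto simp: m_assoc)
  qed
  then have "f \<otimes> \<one> \<in> M"
    using M(2) by blast
  then show "f \<in> M"
    using generate_in_carrier[OF S f] by simp
qed

(* Conjugation is an automorphism, so it commutes with taking generated subgroups. *)
lemma (in group) generate_conjugate:
  assumes g: "g \<in> carrier G" and S: "S \<subseteq> carrier G"
  shows "generate G ((\<lambda>f. g \<otimes> f \<otimes> inv g) ` S) = (\<lambda>f. g \<otimes> f \<otimes> inv g) ` generate G S"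
proof -
  have "(\<lambda>f. g \<otimes> f \<otimes> inv g) \<in> hom G G"
    by (rule homI) (use g in \<open>simp_all add: m_assoc inv_cancel_left\<close>)
  then have "group_hom G G (\<lambda>f. g \<otimes> f \<otimes> inv g)"
    by (simp add: group_hom_def group_hom_axioms_def is_group)
  then show ?thesis
    using S by (rule group_hom.generate_img)
qed

subsection \<open>Inner mapping groups of a loop\<close>

locale loop_on =
  fixes Q :: "'a set" and mult :: "'a \<Rightarrow> 'a \<Rightarrow> 'a" (infixl "\<cdot>" 70) and e :: 'a
  assumes mult_closed: "x \<in> Q \<Longrightarrow> y \<in> Q \<Longrightarrow> x \<cdot> y \<in> Q"
    and unit_closed: "e \<in> Q"
    and left_unit: "x \<in> Q \<Longrightarrow> e \<cdot> x = x"
    and right_unit: "x \<in> Q \<Longrightarrow> x \<cdot> e = x"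
    and left_bij: "x \<in> Q \<Longrightarrow> bij_betw (\<lambda>a. x \<cdot> a) Q Q"
    and right_bij: "x \<in> Q \<Longrightarrow> bij_betw (\<lambda>a. a \<cdot> x) Q Q"
begin

abbreviation Sym :: "('a \<Rightarrow> 'a) monoid" where "Sym \<equiv> BijGroup Q"

definition ltr :: "'a \<Rightarrow> 'a \<Rightarrow> 'a" where "ltr x = restrict (\<lambda>a. x \<cdot> a) Q"
definition rtr :: "'a \<Rightarrow> 'a \<Rightarrow> 'a" where "rtr x = restrict (\<lambda>a. a \<cdot> x) Q"

definition inner_T :: "'a \<Rightarrow> 'a \<Rightarrow> 'a" where
  "inner_T x = inv\<^bsub>Sym\<^esub> (ltr x) \<otimes>\<^bsub>Sym\<^esub> rtr x"
definition inner_L :: "'a \<Rightarrow> 'a \<Rightarrow> 'a \<Rightarrow> 'a" where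
  "inner_L x y = inv\<^bsub>Sym\<^esub> (ltr (y \<cdot> x)) \<otimes>\<^bsub>Sym\<^esub> ltr y \<otimes>\<^bsub>Sym\<^esub> ltr x"
definition inner_R :: "'a \<Rightarrow> 'a \<Rightarrow> 'a \<Rightarrow> 'a" where
  "inner_R x y = inv\<^bsub>Sym\<^esub> (rtr (x \<cdot> y)) \<otimes>\<^bsub>Sym\<^esub> rtr y \<otimes>\<^bsub>Sym\<^esub> rtr x"

definition stab :: "('a \<Rightarrow> 'a) set \<Rightarrow> ('a \<Rightarrow> 'a) set" where
  "stab H = {f \<in> H. f e = e}"

sublocale Sym: group Sym by (rule group_BijGroup)

lemma ltr_Bij: "x \<in> Q \<Longrightarrow> ltr x \<in> Bij Q"
  by (simp add: ltr_def restrict_in_Bij left_bij)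

lemma rtr_Bij: "x \<in> Q \<Longrightarrow> rtr x \<in> Bij Q"
  by (simp add: rtr_def restrict_in_Bij right_bij)

lemma ltr_apply: "a \<in> Q \<Longrightarrow> ltr x a = x \<cdot> a"
  by (simp add: ltr_def)

lemma rtr_apply: "a \<in> Q \<Longrightarrow> rtr x a = a \<cdot> x"
  by (simp add: rtr_def)

lemma ltr_unit: "ltr e = \<one>\<^bsub>Sym\<^esub>"
  by (rule Bij_eqI[where S = Q]) (auto simp: ltr_Bij unit_closed ltr_apply left_unit BijGroup_one_apply)

lemma left_division: "x \<in> Q \<Longrightarrow> a \<in> Q \<Longrightarrow> \<exists>b \<in> Q. x \<cdot> b = a"
  using left_bij[of x] unfolding bij_betw_def by (metis imageE)

lemma right_division: "x \<in> Q \<Longrightarrow> a \<in> Q \<Longrightarrow> \<exists>b \<in> Q. b \<cdot> x = a"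
  using right_bij[of x] unfolding bij_betw_def by (metis imageE)

(* g^-1 f fixes e as soon as f and g agree at e; this is why inner mappings fix e. *)
lemma inv_mult_fixes_unit:
  assumes "f \<in> Bij Q" "g \<in> Bij Q" "f e = g e"
  shows "(inv\<^bsub>Sym\<^esub> g \<otimes>\<^bsub>Sym\<^esub> f) e = e"
  using assms unit_closed
  by (simp add: BijGroup_mult_apply BijGroup_inv_apply)

lemma inner_T_Bij: "x \<in> Q \<Longrightarrow> inner_T x \<in> Bij Q"
  by (simp add: inner_T_def ltr_Bij rtr_Bij)

lemma inner_L_Bij: "x \<in> Q \<Longrightarrow> y \<in> Q \<Longrightarrow> inner_L x y \<in> Bij Q"
  by (simp add: inner_L_def ltr_Bij mult_closed)

lemma inner_T_unit: "x \<in> Q \<Longrightarrow> inner_T x e = e"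
  unfolding inner_T_def
  by (rule inv_mult_fixes_unit) (simp_all add: ltr_Bij rtr_Bij ltr_apply rtr_apply unit_closed left_unit right_unit)

lemma inner_L_unit:
  assumes "x \<in> Q" "y \<in> Q"
  shows "inner_L x y e = e"
proof -
  have "inner_L x y = inv\<^bsub>Sym\<^esub> (ltr (y \<cdot> x)) \<otimes>\<^bsub>Sym\<^esub> (ltr y \<otimes>\<^bsub>Sym\<^esub> ltr x)"
    using assms by (simp add: inner_L_def Sym.m_assoc ltr_Bij mult_closed)
  moreover have "(inv\<^bsub>Sym\<^esub> (ltr (y \<cdot> x)) \<otimes>\<^bsub>Sym\<^esub> (ltr y \<otimes>\<^bsub>Sym\<^esub> ltr x)) e = e"
    using assms
    by (intro inv_mult_fixes_unit) (simp_all add: ltr_Bij mult_closed BijGroup_mult_apply ltr_apply unit_closed right_unit)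
  ultimately show ?thesis by simp
qed

lemma inner_R_unit:
  assumes "x \<in> Q" "y \<in> Q"
  shows "inner_R x y e = e"
proof -
  have "inner_R x y = inv\<^bsub>Sym\<^esub> (rtr (x \<cdot> y)) \<otimes>\<^bsub>Sym\<^esub> (rtr y \<otimes>\<^bsub>Sym\<^esub> rtr x)"
    using assms by (simp add: inner_R_def Sym.m_assoc rtr_Bij mult_closed)
  moreover have "(inv\<^bsub>Sym\<^esub> (rtr (x \<cdot> y)) \<otimes>\<^bsub>Sym\<^esub> (rtr y \<otimes>\<^bsub>Sym\<^esub> rtr x)) e = e"
    using assms
    by (intro inv_mult_fixes_unit) (simp_all add: rtr_Bij mult_closed BijGroup_mult_apply rtr_apply unit_closed left_unit)
  ultimately show ?thesis by simp
qed

(* Word identities expressing L_b^-1 g L_a through inner mappings, for g a translation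
   or its inverse and b = g(a); they drive the coset argument below. *)
lemma ltr_inv_ltr:
  assumes "x \<in> Q" "b \<in> Q"
  shows "inv\<^bsub>Sym\<^esub> (ltr b) \<otimes>\<^bsub>Sym\<^esub> inv\<^bsub>Sym\<^esub> (ltr x) \<otimes>\<^bsub>Sym\<^esub> ltr (x \<cdot> b)
           = inv\<^bsub>Sym\<^esub> (inner_L b x)"
  using assms by (simp add: inner_L_def Sym.inv_mult_group Sym.m_assoc Sym.inv_cancel_left ltr_Bij mult_closed)

lemma rtr_ltr:
  assumes "x \<in> Q" "a \<in> Q"
  shows "inv\<^bsub>Sym\<^esub> (ltr (a \<cdot> x)) \<otimes>\<^bsub>Sym\<^esub> rtr x \<otimes>\<^bsub>Sym\<^esub> ltr a
           = inner_T (a \<cdot> x) \<otimes>\<^bsub>Sym\<^esub> inner_R a x \<otimes>\<^bsub>Sym\<^esub> inv\<^bsub>Sym\<^esub> (inner_T a)"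
  using assms
  by (simp add: inner_T_def inner_R_def Sym.inv_mult_group Sym.m_assoc Sym.inv_cancel_left ltr_Bij rtr_Bij mult_closed)

lemma rtr_inv_ltr:
  assumes "x \<in> Q" "b \<in> Q"
  shows "inv\<^bsub>Sym\<^esub> (ltr b) \<otimes>\<^bsub>Sym\<^esub> inv\<^bsub>Sym\<^esub> (rtr x) \<otimes>\<^bsub>Sym\<^esub> ltr (b \<cdot> x)
           = inner_T b \<otimes>\<^bsub>Sym\<^esub> inv\<^bsub>Sym\<^esub> (inner_R b x) \<otimes>\<^bsub>Sym\<^esub> inv\<^bsub>Sym\<^esub> (inner_T (b \<cdot> x))"
  using assms
  by (simp add: inner_T_def inner_R_def Sym.inv_mult_group Sym.m_assoc Sym.inv_cancel_left ltr_Bij rtr_Bij mult_closed)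

definition inner_Ls :: "('a \<Rightarrow> 'a) set" where
  "inner_Ls = {inner_L x y | x y. x \<in> Q \<and> y \<in> Q}"

definition inner_Rs :: "('a \<Rightarrow> 'a) set" where
  "inner_Rs = {inner_R x y | x y. x \<in> Q \<and> y \<in> Q}"

(* ltr_cosets K = L_Q K is the candidate for the multiplication group: once it is
   shown to contain Mlt, every element of Mlt fixing e lies in K. *)
definition ltr_cosets :: "('a \<Rightarrow> 'a) set \<Rightarrow> ('a \<Rightarrow> 'a) set" where
  "ltr_cosets K = {ltr a \<otimes>\<^bsub>Sym\<^esub> h | a h. a \<in> Q \<and> h \<in> K}"

lemma ltr_cosets_Bij: "subgroup K Sym \<Longrightarrow> ltr_cosets K \<subseteq> Bij Q"
  using subgroup.subset by (fastforce simp: ltr_cosets_def ltr_Bij)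

lemma ltr_cosets_unit:
  assumes "subgroup K Sym"
  shows "\<one>\<^bsub>Sym\<^esub> \<in> ltr_cosets K"
proof -
  have "\<one>\<^bsub>Sym\<^esub> = ltr e \<otimes>\<^bsub>Sym\<^esub> \<one>\<^bsub>Sym\<^esub>"
    by (simp add: ltr_unit Sym.l_one[OF Sym.one_closed])
  then show ?thesis
    using unit_closed subgroup.one_closed[OF assms] unfolding ltr_cosets_def by blast
qed

lemma ltr_cosets_step:
  assumes K: "subgroup K Sym" and g: "g \<in> Bij Q" and a: "a \<in> Q" and h: "h \<in> K" and c: "c \<in> Q"
    and k: "inv\<^bsub>Sym\<^esub> (ltr c) \<otimes>\<^bsub>Sym\<^esub> g \<otimes>\<^bsub>Sym\<^esub> ltr a \<in> K"
  shows "g \<otimes>\<^bsub>Sym\<^esub> (ltr a \<otimes>\<^bsub>Sym\<^esub> h) \<in> ltr_cosets K"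
proof -
  have "h \<in> Bij Q" using subgroup.subset[OF K] h by auto
  then have "g \<otimes>\<^bsub>Sym\<^esub> (ltr a \<otimes>\<^bsub>Sym\<^esub> h)
      = ltr c \<otimes>\<^bsub>Sym\<^esub> ((inv\<^bsub>Sym\<^esub> (ltr c) \<otimes>\<^bsub>Sym\<^esub> g \<otimes>\<^bsub>Sym\<^esub> ltr a) \<otimes>\<^bsub>Sym\<^esub> h)"
    using g a c by (simp add: Sym.m_assoc Sym.inv_cancel_left ltr_Bij)
  then show ?thesis
    using subgroup.m_closed[OF K k h] c by (auto simp: ltr_cosets_def)
qed

lemma ltr_cosets_closed_ltr:
  assumes K: "subgroup K Sym" and LK: "inner_Ls \<subseteq> K" and x: "x \<in> Q" and m: "m \<in> ltr_cosets K"
  shows "ltr x \<otimes>\<^bsub>Sym\<^esub> m \<in> ltr_cosets K \<and> inv\<^bsub>Sym\<^esub> (ltr x) \<otimes>\<^bsub>Sym\<^esub> m \<in> ltr_cosets K"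
proof -
  obtain a h where m: "m = ltr a \<otimes>\<^bsub>Sym\<^esub> h" and a: "a \<in> Q" and h: "h \<in> K"
    using m by (auto simp: ltr_cosets_def)
  obtain b where b: "b \<in> Q" and a_eq: "a = x \<cdot> b"
    using left_division[OF x a] by auto
  have "inner_L a x \<in> K" "inner_L b x \<in> K"
    using LK a b x by (auto simp: inner_Ls_def)
  then have k1: "inv\<^bsub>Sym\<^esub> (ltr (x \<cdot> a)) \<otimes>\<^bsub>Sym\<^esub> ltr x \<otimes>\<^bsub>Sym\<^esub> ltr a \<in> K"
    and k2: "inv\<^bsub>Sym\<^esub> (ltr b) \<otimes>\<^bsub>Sym\<^esub> inv\<^bsub>Sym\<^esub> (ltr x) \<otimes>\<^bsub>Sym\<^esub> ltr a \<in> K"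
    using ltr_inv_ltr[OF x b] subgroup.m_inv_closed[OF K] by (auto simp: inner_L_def a_eq)
  show ?thesis
    unfolding m
    using ltr_cosets_step[OF K ltr_Bij[OF x] a h mult_closed[OF x a] k1]
      ltr_cosets_step[OF K BijGroup_inv_closed[OF ltr_Bij[OF x]] a h b k2] by blast
qed

lemma ltr_cosets_closed_rtr:
  assumes K: "subgroup K Sym" and TK: "inner_T ` Q \<subseteq> K" and RK: "inner_Rs \<subseteq> K"
    and x: "x \<in> Q" and m: "m \<in> ltr_cosets K"
  shows "rtr x \<otimes>\<^bsub>Sym\<^esub> m \<in> ltr_cosets K \<and> inv\<^bsub>Sym\<^esub> (rtr x) \<otimes>\<^bsub>Sym\<^esub> m \<in> ltr_cosets K"
proof -
  obtain a h where m: "m = ltr a \<otimes>\<^bsub>Sym\<^esub> h" and a: "a \<in> Q" and h: "h \<in> K"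
    using m by (auto simp: ltr_cosets_def)
  obtain b where b: "b \<in> Q" and a_eq: "a = b \<cdot> x"
    using right_division[OF x a] by auto
  have T: "inner_T a \<in> K" "inner_T b \<in> K" "inner_T (a \<cdot> x) \<in> K"
    using TK a b x mult_closed by auto
  have R: "inner_R a x \<in> K" "inner_R b x \<in> K"
    using RK a b x by (auto simp: inner_Rs_def)
  have k1: "inv\<^bsub>Sym\<^esub> (ltr (a \<cdot> x)) \<otimes>\<^bsub>Sym\<^esub> rtr x \<otimes>\<^bsub>Sym\<^esub> ltr a \<in> K"
    unfolding rtr_ltr[OF x a] using T R K by (intro subgroup.m_closed subgroup.m_inv_closed)
  have k2: "inv\<^bsub>Sym\<^esub> (ltr b) \<otimes>\<^bsub>Sym\<^esub> inv\<^bsub>Sym\<^esub> (rtr x) \<otimes>\<^bsub>Sym\<^esub> ltr a \<in> K"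
    unfolding a_eq rtr_inv_ltr[OF x b] using T R K a_eq
    by (intro subgroup.m_closed subgroup.m_inv_closed) auto
  show ?thesis
    unfolding m
    using ltr_cosets_step[OF K rtr_Bij[OF x] a h mult_closed[OF a x] k1]
      ltr_cosets_step[OF K BijGroup_inv_closed[OF rtr_Bij[OF x]] a h b k2] by blast
qed

(* An element L_a h of L_Q K fixing e has a = e, hence lies in K. *)
lemma ltr_cosets_stab:
  assumes K: "subgroup K Sym" and K_unit: "\<And>h. h \<in> K \<Longrightarrow> h e = e"
    and f: "f \<in> ltr_cosets K" and f_unit: "f e = e"
  shows "f \<in> K"
proof -
  obtain a h where f_eq: "f = ltr a \<otimes>\<^bsub>Sym\<^esub> h" and a: "a \<in> Q" and h: "h \<in> K"
    using f by (auto simp: ltr_cosets_def)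
  have hB: "h \<in> Bij Q" using subgroup.subset[OF K] h by auto
  have "f e = a"
    using a hB K_unit[OF h] unit_closed by (simp add: f_eq BijGroup_mult_apply ltr_Bij ltr_apply right_unit)
  then have "f = h"
    using f_unit hB by (simp add: f_eq ltr_unit)
  then show ?thesis using h by simp
qed

lemma generate_fixes_unit:
  assumes "S \<subseteq> {f \<in> Bij Q. f e = e}"
  shows "generate Sym S \<subseteq> {f \<in> Bij Q. f e = e}"
  using Sym.generate_subgroup_incl[OF assms stabilizer_subgroup[OF unit_closed]] .

lemma inner_Ls_fix_unit: "inner_Ls \<subseteq> {f \<in> Bij Q. f e = e}"
  using inner_L_Bij inner_L_unit by (auto simp: inner_Ls_def)

lemma inner_T_fix_unit: "inner_T ` Q \<subseteq> {f \<in> Bij Q. f e = e}"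
  using inner_T_Bij inner_T_unit by auto

lemma inner_Ls_in_Mlt: "inner_Ls \<subseteq> generate Sym (ltr ` Q)"
proof
  fix f assume "f \<in> inner_Ls"
  then obtain x y where f: "f = inner_L x y" and xy: "x \<in> Q" "y \<in> Q"
    by (auto simp: inner_Ls_def)
  have gen: "ltr a \<in> generate Sym (ltr ` Q)" if "a \<in> Q" for a
    using that by (auto intro: generate.incl)
  show "f \<in> generate Sym (ltr ` Q)"
    unfolding f inner_L_def using gen xy mult_closed by (intro generate.eng generate.inv) auto
qed

lemma inner_Rs_in_Mlt: "inner_Rs \<subseteq> generate Sym (rtr ` Q)"
proof
  fix f assume "f \<in> inner_Rs"
  then obtain x y where f: "f = inner_R x y" and xy: "x \<in> Q" "y \<in> Q"
    by (auto simp: inner_Rs_def)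
  have gen: "rtr a \<in> generate Sym (rtr ` Q)" if "a \<in> Q" for a
    using that by (auto intro: generate.incl)
  show "f \<in> generate Sym (rtr ` Q)"
    unfolding f inner_R_def using gen xy mult_closed by (intro generate.eng generate.inv) auto
qed

lemma stab_generate_eq:
  assumes S_fix: "S \<subseteq> {f \<in> Bij Q. f e = e}" and Gen: "Gen \<subseteq> Bij Q"
    and S_Gen: "S \<subseteq> generate Sym Gen"
    and closed: "\<And>g m. g \<in> Gen \<Longrightarrow> m \<in> ltr_cosets (generate Sym S) \<Longrightarrow>
      g \<otimes>\<^bsub>Sym\<^esub> m \<in> ltr_cosets (generate Sym S) \<and>
      inv\<^bsub>Sym\<^esub> g \<otimes>\<^bsub>Sym\<^esub> m \<in> ltr_cosets (generate Sym S)"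
  shows "stab (generate Sym Gen) = generate Sym S"
proof
  let ?K = "generate Sym S"
  have K: "subgroup ?K Sym"
    using S_fix by (intro Sym.generate_is_subgroup) auto
  have K_fix: "?K \<subseteq> {f \<in> Bij Q. f e = e}"
    by (rule generate_fixes_unit[OF S_fix])
  have "generate Sym Gen \<subseteq> ltr_cosets ?K"
    using Gen ltr_cosets_Bij[OF K] ltr_cosets_unit[OF K] closed
    by (intro Sym.generate_subset_if_closed) auto
  then show "stab (generate Sym Gen) \<subseteq> ?K"
    using K_fix by (auto simp: stab_def intro: ltr_cosets_stab[OF K])
  have "subgroup (generate Sym Gen) Sym"
    using Gen by (intro Sym.generate_is_subgroup) auto
  then show "?K \<subseteq> stab (generate Sym Gen)"
    using Sym.generate_subgroup_incl[OF S_Gen] K_fix by (auto simp: stab_def)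
qed

theorem stab_ltr_generated: "stab (generate Sym (ltr ` Q)) = generate Sym inner_Ls"
proof (rule stab_generate_eq[OF inner_Ls_fix_unit _ inner_Ls_in_Mlt])
  show "ltr ` Q \<subseteq> Bij Q"
    using ltr_Bij by auto
  have K: "subgroup (generate Sym inner_Ls) Sym"
    using inner_Ls_fix_unit by (intro Sym.generate_is_subgroup) auto
  fix g m assume "g \<in> ltr ` Q" "m \<in> ltr_cosets (generate Sym inner_Ls)"
  then show "g \<otimes>\<^bsub>Sym\<^esub> m \<in> ltr_cosets (generate Sym inner_Ls) \<and>
      inv\<^bsub>Sym\<^esub> g \<otimes>\<^bsub>Sym\<^esub> m \<in> ltr_cosets (generate Sym inner_Ls)"
    using ltr_cosets_closed_ltr[OF K] by (auto intro: generate.incl)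
qed

(* If Inn_r(Q) is contained in Inn_l(Q), then Inn(Q) is generated by the maps T_x
   and L_{x,y}: the generators R_{x,y} of the general description become redundant,
   as they lie in Inn_r(Q) and hence in <L_{x,y}>. *)
theorem stab_mlt_generated:
  assumes Inn_r_Inn_l: "stab (generate Sym (rtr ` Q)) \<subseteq> stab (generate Sym (ltr ` Q))"
  shows "stab (generate Sym (ltr ` Q \<union> rtr ` Q)) = generate Sym (inner_T ` Q \<union> inner_Ls)"
proof (rule stab_generate_eq)
  let ?S = "inner_T ` Q \<union> inner_Ls"
  let ?Gen = "ltr ` Q \<union> rtr ` Q"
  show S_fix: "?S \<subseteq> {f \<in> Bij Q. f e = e}"
    using inner_T_fix_unit inner_Ls_fix_unit by blast
  show "?Gen \<subseteq> Bij Q"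
    using ltr_Bij rtr_Bij by auto
  have "inner_T x \<in> generate Sym ?Gen" if "x \<in> Q" for x
    unfolding inner_T_def using that by (intro generate.eng generate.inv generate.incl) auto
  moreover have "inner_Ls \<subseteq> generate Sym ?Gen"
    using inner_Ls_in_Mlt Sym.mono_generate[of "ltr ` Q" ?Gen] ltr_Bij rtr_Bij by auto
  ultimately show "?S \<subseteq> generate Sym ?Gen"
    by auto
  let ?K = "generate Sym ?S"
  have K: "subgroup ?K Sym"
    using S_fix by (intro Sym.generate_is_subgroup) auto
  have TK: "inner_T ` Q \<subseteq> ?K" and LK: "inner_Ls \<subseteq> ?K"
    by (auto intro: generate.incl)
  have "inner_Rs \<subseteq> stab (generate Sym (rtr ` Q))"
    using inner_Rs_in_Mlt inner_R_unit by (auto simp: stab_def inner_Rs_def)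
  also have "\<dots> \<subseteq> generate Sym inner_Ls"
    using Inn_r_Inn_l by (simp add: stab_ltr_generated)
  also have "\<dots> \<subseteq> ?K"
    using S_fix by (intro Sym.mono_generate) auto
  finally have RK: "inner_Rs \<subseteq> ?K" .
  fix g m assume "g \<in> ?Gen" "m \<in> ltr_cosets ?K"
  then show "g \<otimes>\<^bsub>Sym\<^esub> m \<in> ltr_cosets ?K \<and> inv\<^bsub>Sym\<^esub> g \<otimes>\<^bsub>Sym\<^esub> m \<in> ltr_cosets ?K"
    using ltr_cosets_closed_ltr[OF K LK] ltr_cosets_closed_rtr[OF K TK RK] by auto
qed

end

subsection \<open>The Cayley-Dickson loops in closed form\<close>

(* Closed form of the Cayley-Dickson multiplication: the bit vectors multiply by
   xor, and the sign of a product is the xor of the signs and of a cocycle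
   sign_cocycle on the bit vectors, defined by the same recursion as cd_mult. *)
definition bits_xor :: "bool list \<Rightarrow> bool list \<Rightarrow> bool list" where
  "bits_xor u v = map2 (\<noteq>) u v"

function (sequential) sign_cocycle :: "bool list \<Rightarrow> bool list \<Rightarrow> bool" where
  "sign_cocycle (False # u) (False # v) = sign_cocycle u v"
| "sign_cocycle (False # u) (True # v) = sign_cocycle v u"
| "sign_cocycle (True # u) (False # v) = (sign_cocycle u v \<noteq> (True \<in> set v))"
| "sign_cocycle (True # u) (True # v) = (\<not> (True \<in> set v) \<noteq> sign_cocycle v u)"
| "sign_cocycle _ _ = False"
  by pat_completeness auto
termination by (relation "measure (\<lambda>(u, v). length u + length v)") auto

lemma bits_xor_simps [simp]:
  "bits_xor (a # u) (b # v) = (a \<noteq> b) # bits_xor u v"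
  "bits_xor [] v = []" "bits_xor u [] = []"
  by (simp_all add: bits_xor_def)

lemma length_bits_xor [simp]: "length (bits_xor u v) = min (length u) (length v)"
  by (simp add: bits_xor_def)

lemma bits_xor_comm: "bits_xor u v = bits_xor v u"
proof (induction u arbitrary: v)
  case (Cons a u)
  then show ?case by (cases v) auto
qed simp

lemma bits_xor_assoc: "bits_xor (bits_xor u v) w = bits_xor u (bits_xor v w)"
proof (induction u arbitrary: v w)
  case (Cons a u)
  then show ?case by (cases v; cases w) auto
qed simp

lemma bits_xor_cancel: "length u = length v \<Longrightarrow> bits_xor (bits_xor u v) v = u"
  by (induction u v rule: list_induct2) auto

lemma bits_xor_zeros [simp]:
  "length u = n \<Longrightarrow> bits_xor u (replicate n False) = u"
  "length u = n \<Longrightarrow> bits_xor (replicate n False) u = u"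
  by (induction u arbitrary: n) auto

lemma conj_sign_eq: "conj_sign s bs = (s \<noteq> (True \<in> set bs))"
  by (induction s bs rule: conj_sign.induct) auto

lemma cd_mult_closed_form:
  "length u = length v \<Longrightarrow> cd_mult (s, u) (t, v) = ((s \<noteq> t) \<noteq> sign_cocycle u v, bits_xor u v)"
  by (induction "(s, u)" "(t, v)" arbitrary: s t u v rule: cd_mult.induct)
    (auto simp: cd_cons_def cd_neg_def conj_sign_eq bits_xor_comm)

(* Cocycle identity behind (xy)* = y* x*; the two symmetric versions are proved
   together because the recursion swaps the arguments. *)
lemma sign_cocycle_conj_aux:
  fixes u v :: "bool list"
  assumes "length u = length v"
  shows "(sign_cocycle u v \<noteq> (True \<in> set (bits_xor u v))) =
           ((sign_cocycle v u \<noteq> (True \<in> set v)) \<noteq> (True \<in> set u)) \<and>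
         (sign_cocycle v u \<noteq> (True \<in> set (bits_xor v u))) =
           ((sign_cocycle u v \<noteq> (True \<in> set u)) \<noteq> (True \<in> set v))"
  using assms
proof (induction u v rule: list_induct2)
  case (Cons a u b v)
  then show ?case by (cases a; cases b) (simp_all add: bits_xor_comm, argo+)
qed simp

lemma cd_conj_closed_form: "cd_conj (s, u) = (s \<noteq> (True \<in> set u), u)"
  by (simp add: cd_conj_def conj_sign_eq)

lemma cd_conj_mult:
  assumes "x \<in> cd_carrier n" "y \<in> cd_carrier n"
  shows "cd_conj (cd_mult x y) = cd_mult (cd_conj y) (cd_conj x)"
proof -
  obtain s u t v where xy: "x = (s, u)" "y = (t, v)" and l: "length u = length v"
    using assms by (cases x; cases y) (auto simp: cd_carrier_def)
  show ?thesis
    using sign_cocycle_conj_aux[OF l] l unfolding xy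
    by (simp add: cd_mult_closed_form cd_conj_closed_form bits_xor_comm) argo
qed

lemma sign_cocycle_zeros:
  "length v = n \<Longrightarrow> \<not> sign_cocycle (replicate n False) v \<and> \<not> sign_cocycle v (replicate n False)"
proof (induction v arbitrary: n)
  case (Cons b v)
  then obtain m where "n = Suc m" "length v = m" by auto
  then show ?case using Cons.IH by (cases b) auto
qed simp

lemma cd_carrier_iff [simp]: "(s, u) \<in> cd_carrier n \<longleftrightarrow> length u = n"
  by (simp add: cd_carrier_def)

lemma cd_mult_closed: "x \<in> cd_carrier n \<Longrightarrow> y \<in> cd_carrier n \<Longrightarrow> cd_mult x y \<in> cd_carrier n"
  by (cases x; cases y) (simp add: cd_mult_closed_form)

lemma cd_one_closed: "cd_one n \<in> cd_carrier n"
  by (simp add: cd_one_def)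

lemma cd_mult_one:
  assumes "x \<in> cd_carrier n"
  shows "cd_mult (cd_one n) x = x" and "cd_mult x (cd_one n) = x"
proof -
  obtain s u where x: "x = (s, u)" and u: "length u = n"
    using assms by (cases x) (auto simp: cd_carrier_def)
  show "cd_mult (cd_one n) x = x" and "cd_mult x (cd_one n) = x"
    using sign_cocycle_zeros[OF u] u by (simp_all add: x cd_one_def cd_mult_closed_form)
qed

lemma cd_conj_closed: "x \<in> cd_carrier n \<Longrightarrow> cd_conj x \<in> cd_carrier n"
  by (cases x) (simp add: cd_conj_closed_form)

lemma cd_conj_conj: "cd_conj (cd_conj x) = x"
  by (cases x) (auto simp: cd_conj_closed_form)

subsection \<open>Sign-twisted translations\<close>

(* They form
   a subgroup of Sym(Q_n) containing all translations, hence Mlt(Q_n); those fixing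
   the unit have c = 0 and only change signs. *)
definition twist :: "nat \<Rightarrow> (bool list \<Rightarrow> bool) \<Rightarrow> bool list \<Rightarrow> cd \<Rightarrow> cd" where
  "twist n \<sigma> c = restrict (\<lambda>(s, u). (s \<noteq> \<sigma> u, bits_xor u c)) (cd_carrier n)"

definition twists :: "nat \<Rightarrow> (cd \<Rightarrow> cd) set" where
  "twists n = {twist n \<sigma> c | \<sigma> c. length c = n}"

lemma twist_apply: "length u = n \<Longrightarrow> twist n \<sigma> c (s, u) = (s \<noteq> \<sigma> u, bits_xor u c)"
  by (simp add: twist_def)

lemma twist_Bij:
  assumes c: "length c = n"
  shows "twist n \<sigma> c \<in> Bij (cd_carrier n)"
proof -
  have "bij_betw (twist n \<sigma> c) (cd_carrier n) (cd_carrier n)"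
    by (rule bij_betw_byWitness[where f' = "twist n (\<lambda>u. \<sigma> (bits_xor u c)) c"])
      (use c in \<open>auto simp: cd_carrier_def twist_apply bits_xor_cancel\<close>)
  then show ?thesis
    by (simp add: Bij_def twist_def)
qed

lemma twist_mult:
  assumes "length c = n" "length d = n"
  shows "twist n \<sigma> c \<otimes>\<^bsub>SymQ n\<^esub> twist n \<tau> d = twist n (\<lambda>u. \<tau> u \<noteq> \<sigma> (bits_xor u d)) (bits_xor d c)"
proof (rule Bij_eqI)
  fix x assume "x \<in> cd_carrier n"
  then obtain s u where "x = (s, u)" "length u = n" by (cases x) auto
  then show "(twist n \<sigma> c \<otimes>\<^bsub>SymQ n\<^esub> twist n \<tau> d) x = twist n (\<lambda>u. \<tau> u \<noteq> \<sigma> (bits_xor u d)) (bits_xor d c) x"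
    using assms by (auto simp: BijGroup_mult_apply twist_Bij twist_apply bits_xor_assoc)
qed (use assms in \<open>simp_all add: twist_Bij\<close>)

lemma twist_unit: "\<one>\<^bsub>SymQ n\<^esub> = twist n (\<lambda>_. False) (replicate n False)"
proof (rule Bij_eqI)
  fix x assume "x \<in> cd_carrier n"
  then obtain s u where "x = (s, u)" "length u = n" by (cases x) auto
  then show "\<one>\<^bsub>SymQ n\<^esub> x = twist n (\<lambda>_. False) (replicate n False) x"
    by (simp add: BijGroup_one_apply twist_apply)
qed (simp_all add: twist_Bij)

lemma twist_inv:
  assumes c: "length c = n"
  shows "inv\<^bsub>SymQ n\<^esub> (twist n \<sigma> c) = twist n (\<lambda>u. \<sigma> (bits_xor u c)) c"
proof -
  interpret group "SymQ n" by (rule group_BijGroup)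
  have "twist n (\<lambda>u. \<sigma> (bits_xor u c)) c \<otimes>\<^bsub>SymQ n\<^esub> twist n \<sigma> c = \<one>\<^bsub>SymQ n\<^esub>"
  proof (rule Bij_eqI)
    fix x assume "x \<in> cd_carrier n"
    then obtain s u where "x = (s, u)" "length u = n" by (cases x) auto
    then show "(twist n (\<lambda>u. \<sigma> (bits_xor u c)) c \<otimes>\<^bsub>SymQ n\<^esub> twist n \<sigma> c) x = \<one>\<^bsub>SymQ n\<^esub> x"
      using c by (auto simp: BijGroup_mult_apply BijGroup_one_apply twist_Bij twist_apply bits_xor_cancel)
  qed (use c in \<open>simp_all add: twist_Bij\<close>)
  then show ?thesis
    using c by (intro inv_equality) (simp_all add: twist_Bij)
qed

lemma twists_Bij: "twists n \<subseteq> Bij (cd_carrier n)"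
  by (auto simp: twists_def twist_Bij)

lemma twists_subgroup: "subgroup (twists n) (SymQ n)"
proof
  show "twists n \<subseteq> carrier (SymQ n)"
    using twists_Bij by simp
  show "\<one>\<^bsub>SymQ n\<^esub> \<in> twists n"
    unfolding twists_def twist_unit
    by (intro CollectI exI[of _ "\<lambda>_. False"] exI[of _ "replicate n False"]) simp
next
  fix f g assume "f \<in> twists n" "g \<in> twists n"
  then obtain \<sigma> c \<tau> d where f: "f = twist n \<sigma> c" "length c = n" and g: "g = twist n \<tau> d" "length d = n"
    unfolding twists_def by blast
  then have "f \<otimes>\<^bsub>SymQ n\<^esub> g = twist n (\<lambda>u. \<tau> u \<noteq> \<sigma> (bits_xor u d)) (bits_xor d c)"
    by (simp add: twist_mult)
  moreover have "length (bits_xor d c) = n"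
    using f g by simp
  ultimately show "f \<otimes>\<^bsub>SymQ n\<^esub> g \<in> twists n"
    unfolding twists_def by (intro CollectI exI conjI)
next
  fix f assume "f \<in> twists n"
  then obtain \<sigma> c where f: "f = twist n \<sigma> c" "length c = n"
    unfolding twists_def by blast
  then have "inv\<^bsub>SymQ n\<^esub> f = twist n (\<lambda>u. \<sigma> (bits_xor u c)) c"
    by (simp add: twist_inv)
  then show "inv\<^bsub>SymQ n\<^esub> f \<in> twists n"
    unfolding twists_def using f by (intro CollectI exI conjI)
qed

lemma Lt_twist:
  assumes "x = (s, u)" "length u = n"
  shows "Lt n x = twist n (\<lambda>v. s \<noteq> sign_cocycle u v) u"
  unfolding Lt_def twist_def using assms
  by (intro restrict_ext) (auto simp: cd_mult_closed_form bits_xor_comm)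

lemma Rt_twist:
  assumes "x = (s, u)" "length u = n"
  shows "Rt n x = twist n (\<lambda>v. s \<noteq> sign_cocycle v u) u"
  unfolding Rt_def twist_def using assms
  by (intro restrict_ext) (auto simp: cd_mult_closed_form)

lemma Lt_in_twists: "x \<in> cd_carrier n \<Longrightarrow> Lt n x \<in> twists n"
  by (cases x) (auto simp: twists_def Lt_twist)

lemma Rt_in_twists: "x \<in> cd_carrier n \<Longrightarrow> Rt n x \<in> twists n"
  by (cases x) (auto simp: twists_def Rt_twist)

lemma Lt_Bij: "x \<in> cd_carrier n \<Longrightarrow> Lt n x \<in> Bij (cd_carrier n)"
  using Lt_in_twists twists_Bij by blast

lemma Rt_Bij: "x \<in> cd_carrier n \<Longrightarrow> Rt n x \<in> Bij (cd_carrier n)"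
  using Rt_in_twists twists_Bij by blast

lemma cd_loop: "loop_on (cd_carrier n) cd_mult (cd_one n)"
proof
  fix x assume x: "x \<in> cd_carrier n"
  have "Lt n x \<in> Bij (cd_carrier n)" "Rt n x \<in> Bij (cd_carrier n)"
    using Lt_Bij[OF x] Rt_Bij[OF x] .
  then show "bij_betw (\<lambda>a. cd_mult x a) (cd_carrier n) (cd_carrier n)"
    and "bij_betw (\<lambda>a. cd_mult a x) (cd_carrier n) (cd_carrier n)"
    by (simp_all add: Bij_def Lt_def Rt_def)
qed (simp_all add: cd_mult_closed cd_one_closed cd_mult_one)

subsection \<open>Conjugation and the equality of Inn_l and Inn_r\<close>

definition conj_perm :: "nat \<Rightarrow> cd \<Rightarrow> cd" where
  "conj_perm n = twist n (\<lambda>u. True \<in> set u) (replicate n False)"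

lemma conj_perm_Bij: "conj_perm n \<in> Bij (cd_carrier n)"
  by (simp add: conj_perm_def twist_Bij)

lemma conj_perm_apply: "a \<in> cd_carrier n \<Longrightarrow> conj_perm n a = cd_conj a"
  by (cases a) (simp add: conj_perm_def twist_apply cd_conj_closed_form)

lemma conj_perm_square: "conj_perm n \<otimes>\<^bsub>SymQ n\<^esub> conj_perm n = \<one>\<^bsub>SymQ n\<^esub>"
  by (rule Bij_eqI[where S = "cd_carrier n"])
    (simp_all add: conj_perm_Bij BijGroup_mult_apply BijGroup_one_apply conj_perm_apply
      cd_conj_closed cd_conj_conj)

lemma conj_perm_inv: "inv\<^bsub>SymQ n\<^esub> (conj_perm n) = conj_perm n"
  using group.inv_equality[OF group_BijGroup conj_perm_square] by (simp add: conj_perm_Bij)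

lemma cd_conj_image: "cd_conj ` cd_carrier n = cd_carrier n"
proof
  show "cd_conj ` cd_carrier n \<subseteq> cd_carrier n"
    using cd_conj_closed by blast
  show "cd_carrier n \<subseteq> cd_conj ` cd_carrier n"
  proof
    fix x assume "x \<in> cd_carrier n"
    then have "x = cd_conj (cd_conj x)" "cd_conj x \<in> cd_carrier n"
      by (simp_all add: cd_conj_conj cd_conj_closed)
    then show "x \<in> cd_conj ` cd_carrier n" by blast
  qed
qed

(* J L_x J = R_{x*}, because conjugation is an anti-automorphism. *)
lemma conj_perm_Lt:
  assumes x: "x \<in> cd_carrier n"
  shows "conj_perm n \<otimes>\<^bsub>SymQ n\<^esub> Lt n x \<otimes>\<^bsub>SymQ n\<^esub> inv\<^bsub>SymQ n\<^esub> (conj_perm n) = Rt n (cd_conj x)"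
proof (rule Bij_eqI)
  have L: "Lt n x \<in> Bij (cd_carrier n)"
    using Lt_Bij[OF x] .
  then show "conj_perm n \<otimes>\<^bsub>SymQ n\<^esub> Lt n x \<otimes>\<^bsub>SymQ n\<^esub> inv\<^bsub>SymQ n\<^esub> (conj_perm n) \<in> Bij (cd_carrier n)"
    by (simp add: conj_perm_Bij)
  show "Rt n (cd_conj x) \<in> Bij (cd_carrier n)"
    using Rt_Bij[OF cd_conj_closed[OF x]] .
  fix a assume a: "a \<in> cd_carrier n"
  have "(conj_perm n \<otimes>\<^bsub>SymQ n\<^esub> Lt n x \<otimes>\<^bsub>SymQ n\<^esub> inv\<^bsub>SymQ n\<^esub> (conj_perm n)) a
      = cd_conj (cd_mult x (cd_conj a))"
    using a x L by (simp add: conj_perm_inv conj_perm_Bij BijGroup_mult_apply Bij_mem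
        conj_perm_apply Lt_def cd_conj_closed cd_mult_closed)
  also have "\<dots> = cd_mult a (cd_conj x)"
    using cd_conj_mult[OF x cd_conj_closed[OF a]] by (simp add: cd_conj_conj)
  also have "\<dots> = Rt n (cd_conj x) a"
    using a by (simp add: Rt_def)
  finally show "(conj_perm n \<otimes>\<^bsub>SymQ n\<^esub> Lt n x \<otimes>\<^bsub>SymQ n\<^esub> inv\<^bsub>SymQ n\<^esub> (conj_perm n)) a
      = Rt n (cd_conj x) a" .
qed

lemma Mlt_r_conj:
  "Mlt_r n = (\<lambda>f. conj_perm n \<otimes>\<^bsub>SymQ n\<^esub> f \<otimes>\<^bsub>SymQ n\<^esub> inv\<^bsub>SymQ n\<^esub> (conj_perm n)) ` Mlt_l n"
proof -
  interpret group "SymQ n" by (rule group_BijGroup)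
  let ?c = "\<lambda>f. conj_perm n \<otimes>\<^bsub>SymQ n\<^esub> f \<otimes>\<^bsub>SymQ n\<^esub> inv\<^bsub>SymQ n\<^esub> (conj_perm n)"
  have "?c ` Lt n ` cd_carrier n = Rt n ` cd_conj ` cd_carrier n"
    by (auto simp: conj_perm_Lt image_image intro!: image_cong)
  then have gens: "?c ` Lt n ` cd_carrier n = Rt n ` cd_carrier n"
    by (simp add: cd_conj_image)
  have "Lt n ` cd_carrier n \<subseteq> carrier (SymQ n)"
    using Lt_Bij by auto
  then show ?thesis
    unfolding Mlt_r_def Mlt_l_def gens[symmetric]
    by (intro generate_conjugate) (simp_all add: conj_perm_Bij)
qed

lemma Mlt_l_twists: "Mlt_l n \<subseteq> twists n"
  unfolding Mlt_l_def using Lt_in_twists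
  by (intro group.generate_subgroup_incl[OF group_BijGroup _ twists_subgroup]) auto

lemma Mlt_r_twists: "Mlt_r n \<subseteq> twists n"
  unfolding Mlt_r_def using Rt_in_twists
  by (intro group.generate_subgroup_incl[OF group_BijGroup _ twists_subgroup]) auto

(* Twists fixing the unit only change signs, hence commute with J. *)
lemma twist_fixing_unit_commutes:
  assumes f: "f \<in> twists n" and f_unit: "f (cd_one n) = cd_one n"
  shows "conj_perm n \<otimes>\<^bsub>SymQ n\<^esub> f \<otimes>\<^bsub>SymQ n\<^esub> inv\<^bsub>SymQ n\<^esub> (conj_perm n) = f"
proof -
  obtain \<sigma> c where f_eq: "f = twist n \<sigma> c" and c: "length c = n"
    using f by (auto simp: twists_def)
  have "bits_xor (replicate n False) c = replicate n False"
    using f_unit by (simp add: f_eq cd_one_def twist_apply)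
  then have c0: "c = replicate n False"
    using c by simp
  have fB: "f \<in> Bij (cd_carrier n)"
    using f_eq c by (simp add: twist_Bij)
  show ?thesis
  proof (rule Bij_eqI[where S = "cd_carrier n"])
    fix x assume "x \<in> cd_carrier n"
    then obtain s u where x: "x = (s, u)" and u: "length u = n" by (cases x) auto
    have "f (cd_conj x) \<in> cd_carrier n"
      using fB u by (simp add: x Bij_mem cd_conj_closed)
    then show "(conj_perm n \<otimes>\<^bsub>SymQ n\<^esub> f \<otimes>\<^bsub>SymQ n\<^esub> inv\<^bsub>SymQ n\<^esub> (conj_perm n)) x = f x"
      using fB u
      by (auto simp: x f_eq c0 conj_perm_inv conj_perm_Bij BijGroup_mult_apply conj_perm_apply
          cd_conj_closed_form twist_apply)
  qed (simp_all add: fB conj_perm_Bij)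
qed

(* Inn_l(Q_n) = Inn_r(Q_n): an element f of either fixes 1, so J f J = f, while
   conjugation by J exchanges Mlt_l and Mlt_r. *)
theorem Inn_l_eq_Inn_r: "Inn_l n = Inn_r n"
proof -
  interpret group "SymQ n" by (rule group_BijGroup)
  let ?c = "\<lambda>f. conj_perm n \<otimes>\<^bsub>SymQ n\<^esub> f \<otimes>\<^bsub>SymQ n\<^esub> inv\<^bsub>SymQ n\<^esub> (conj_perm n)"
  have fixed: "?c f = f" if "f \<in> Mlt_l n \<union> Mlt_r n" "f (cd_one n) = cd_one n" for f
    using that Mlt_l_twists Mlt_r_twists twist_fixing_unit_commutes by blast
  have "f \<in> Mlt_r n" if "f \<in> Inn_l n" for f
  proof -
    have "f \<in> Mlt_l n" "?c f = f"
      using that fixed by (auto simp: Inn_l_def stab1_def)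
    then show ?thesis
      unfolding Mlt_r_conj by (metis image_eqI)
  qed
  moreover have "f \<in> Mlt_l n" if "f \<in> Inn_r n" for f
  proof -
    have "f \<in> ?c ` Mlt_l n"
      using that Mlt_r_conj[of n] by (simp add: Inn_r_def stab1_def)
    then obtain g where g: "g \<in> Mlt_l n" and f_eq: "f = ?c g"
      by blast
    have "f = ?c f"
      using that fixed by (simp add: Inn_r_def stab1_def)
    also have "?c f = g"
    proof -
      have "g \<in> Bij (cd_carrier n)"
        using g Mlt_l_twists twists_Bij by blast
      then show ?thesis
        unfolding f_eq using conj_perm_Bij
        by (simp add: conj_perm_inv m_assoc[symmetric] conj_perm_square) (simp add: m_assoc conj_perm_square)
    qed
    finally show ?thesis using g by simp
  qed
  ultimately show ?thesis
    by (auto simp: Inn_l_def Inn_r_def stab1_def)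
qed

theorem mainTheorem12:
  fixes n :: nat
  shows "Inn_l n = Inn_r n \<and>
    Inn n = generate (SymQ n)
      ((Tmap n ` cd_carrier n) \<union> {Lmap n x y | x y. x \<in> cd_carrier n \<and> y \<in> cd_carrier n})"
proof
  show lr: "Inn_l n = Inn_r n"
    by (rule Inn_l_eq_Inn_r)
  interpret Qn: loop_on "cd_carrier n" cd_mult "cd_one n"
    by (rule cd_loop)
  have translates: "Qn.ltr = Lt n" "Qn.rtr = Rt n"
    by (simp_all add: fun_eq_iff Qn.ltr_def Qn.rtr_def Lt_def Rt_def)
  have inner: "Qn.inner_T = Tmap n" "Qn.inner_L = Lmap n"
    by (simp_all add: fun_eq_iff Qn.inner_T_def Qn.inner_L_def Tmap_def Lmap_def translates)
  have stab: "Qn.stab = stab1 n"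
    by (simp add: fun_eq_iff Qn.stab_def stab1_def)
  have "Qn.stab (generate (SymQ n) (Qn.rtr ` cd_carrier n))
      \<subseteq> Qn.stab (generate (SymQ n) (Qn.ltr ` cd_carrier n))"
    using lr by (simp add: stab translates Inn_l_def Inn_r_def Mlt_l_def Mlt_r_def)
  from Qn.stab_mlt_generated[OF this]
  show "Inn n = generate (SymQ n)
      ((Tmap n ` cd_carrier n) \<union> {Lmap n x y | x y. x \<in> cd_carrier n \<and> y \<in> cd_carrier n})"
    by (simp add: stab translates inner Inn_def Mlt_def Qn.inner_Ls_def)
qed

end
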